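(* Let $\kappa$ satisfy (A-$\kappa$) in the context, and let $0<\delta_0<1$ and $r_0>0$. Then for every positive integer $k$ there exist $\mu=\mu(r_0,\delta_0,k)>0$ and a positive integer $i=i(r_0,\delta_0,k)$ such that $$\inf_{x\in B_{kr_0}(0)}\sum_{j=0}^{i}\frac{(\mathcal{K}^ju)(x)}{j!}\ge\mu$$ for every $u\in L^\infty(\mathbb{R}^N)$ with $u\ge0$ and $\int_{B_{r_0}(0)}u\,dx\ge\delta_0$. In particular, for such $u$, $(e^{\mathcal{K}}u)(x)\ge\mu$ for all $x\in B_{kr_0}(0)$.
   Context: Assumption (A-$\kappa$): $\kappa\in C^1(\mathbb{R}^N,[0,\infty))$, $\kappa(0)>0$, $\int_{\mathbb{R}^N}\kappa=1$, and there are $\mu',M>0$ with $\kappa(x)\le e^{-\mu'|x|}$ and $|\nabla\kappa(x)|\le e^{-\mu'|x|}$ for $|x|\ge M$. $\mathcal{K}$ is the convolution operator $(\mathcal{K}u)(x)=\int_{\mathbb{R}^N}\kappa(y-x)u(y)\,dy$ on $L^\infty(\mathbb{R}^N)$, $\mathcal{K}^j$ its $j$-th power ($\mathcal{K}^0=I$), $e^{\mathcal{K}}=\sum_{j\ge0}\mathcal{K}^j/j!$, and $B_r(x_0)=\{x\in\mathbb{R}^N:|x-x_0|<r\}$. *)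

theory Defs
  imports "HOL-Analysis.Analysis"
begin

definition conv_op :: "('a::euclidean_space \<Rightarrow> real) \<Rightarrow> ('a \<Rightarrow> real) \<Rightarrow> 'a \<Rightarrow> real" where
  "conv_op \<kappa> u x = (LINT y|lborel. \<kappa> (y - x) * u y)"

definition kappa_assm :: "('a::euclidean_space \<Rightarrow> real) \<Rightarrow> bool" where
  "kappa_assm \<kappa> \<longleftrightarrow>
     (\<exists>g :: 'a \<Rightarrow> 'a. (\<forall>x. (\<kappa> has_derivative (\<lambda>h. g x \<bullet> h)) (at x)) \<and> continuous_on UNIV g \<and>
        (\<exists>\<mu>' M. \<mu>' > 0 \<and> M > 0 \<and>
           (\<forall>x. norm x \<ge> M \<longrightarrow> \<kappa> x \<le> exp (- \<mu>' * norm x) \<and> norm (g x) \<le> exp (- \<mu>' * norm x)))) \<and>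
     (\<forall>x. \<kappa> x \<ge> 0) \<and> \<kappa> 0 > 0 \<and>
     integrable lborel \<kappa> \<and> (LINT x|lborel. \<kappa> x) = 1"

text \<open>Nonnegative essentially bounded measurable functions (representatives of L^infinity classes).\<close>
definition Linf_nonneg :: "('a::euclidean_space \<Rightarrow> real) \<Rightarrow> bool" where
  "Linf_nonneg u \<longleftrightarrow> u \<in> borel_measurable lborel \<and> (\<exists>B. AE x in lborel. \<bar>u x\<bar> \<le> B) \<and> (\<forall>x. u x \<ge> 0)"

end

theory Submission
  imports Defs
begin

text \<open>
  Since \<kappa> is continuous with \<kappa>(0) > 0, it is bounded below by some c > 0 on a ball of radius
  \<rho> = 4\<sigma>. Covering B(0, r0) by N balls of radius \<sigma>, one of them, B(z, \<sigma>), carries mass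
  at least \<delta>0/N of u, so K u \<ge> c \<delta>0/N on B(z, \<sigma>). A lower bound a for v on a ball B(z, \<sigma>)
  gives K v \<ge> c a |B(0, \<sigma>)| on every ball B(z', \<sigma>) with |z - z'| \<le> 2\<sigma>; walking in steps of
  length 2\<sigma> from z, after n steps with 2\<sigma>n \<ge> (k + 1) r0 the function K^(n+1) u has a
  positive lower bound independent of u on all of B(0, k r0). All terms of the exponential
  series are nonnegative, and summable because K does not increase the essential supremum,
  so this single term bounds both the partial and the full series from below.
\<close>

lemma integrable_translate_lborel:
  fixes f :: "'a::euclidean_space \<Rightarrow> real"
  assumes "integrable lborel f"
  shows "integrable lborel (\<lambda>y. f (y - x))"
proof -
  have "integrable (distr lborel borel ((+) (- x))) f"
    using assms by (simp add: lborel_distr_plus)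
  then show ?thesis
    using assms by (subst (asm) integrable_distr_eq) (auto simp: borel_measurable_integrable)
qed

lemma integral_translate_lborel:
  fixes f :: "'a::euclidean_space \<Rightarrow> real"
  assumes "f \<in> borel_measurable borel"
  shows "(LINT y|lborel. f (y - x)) = (LINT y|lborel. f y)"
  using integral_distr[of "(+) (- x)" lborel borel f] assms by (simp add: lborel_distr_plus)

lemma set_integrable_Linf_nonneg:
  assumes "Linf_nonneg u" "A \<in> sets lborel" "emeasure lborel A < \<infinity>"
  shows "set_integrable lborel A u"
proof -
  obtain B where "AE x in lborel. \<bar>u x\<bar> \<le> B"
    using assms(1) by (auto simp: Linf_nonneg_def)
  then show ?thesis
    using assms unfolding set_integrable_def Linf_nonneg_def
    by (intro integrableI_bounded_set[where A = A and B = B]) (auto elim!: eventually_mono)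
qed

lemma set_integral_le_cover:
  assumes u: "Linf_nonneg u" and C: "finite C" "C \<noteq> {}" "ball 0 r \<subseteq> (\<Union>z\<in>C. ball z \<sigma>)"
  obtains z where "z \<in> C"
    "(LINT y:ball 0 r|lborel. u y) \<le> card C * (LINT y:ball z \<sigma>|lborel. u y)"
proof -
  define I where "I z = (LINT y:ball z \<sigma>|lborel. u y)" for z
  obtain z where z: "z \<in> C" "I z = Max (I ` C)"
    using C by (metis Max_in finite_imageI imageE image_is_empty)
  have ball_integrable: "set_integrable lborel (ball w s) u" for w s
    using u emeasure_lborel_ball_finite by (intro set_integrable_Linf_nonneg) auto
  have "(LINT y:ball 0 r|lborel. u y) \<le> (LINT y|lborel. (\<Sum>w\<in>C. indicator (ball w \<sigma>) y * u y))"
    unfolding set_lebesgue_integral_def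
  proof (intro integral_mono)
    fix y
    have nonneg: "0 \<le> indicator (ball w \<sigma>) y * u y" for w
      using u by (simp add: Linf_nonneg_def)
    show "indicator (ball 0 r) y *\<^sub>R u y \<le> (\<Sum>w\<in>C. indicator (ball w \<sigma>) y * u y)"
    proof (cases "y \<in> ball 0 r")
      case True
      then obtain w where "w \<in> C" "y \<in> ball w \<sigma>"
        using C(3) by blast
      then show ?thesis
        using True C(1) nonneg member_le_sum[of w C "\<lambda>w. indicator (ball w \<sigma>) y * u y"] by simp
    qed (simp add: nonneg sum_nonneg)
  qed (use ball_integrable in \<open>auto simp: set_integrable_def\<close>)
  also have "\<dots> = (\<Sum>w\<in>C. I w)"
    using ball_integrable by (simp add: I_def set_lebesgue_integral_def set_integrable_def)
  also have "\<dots> \<le> card C * I z"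
    using C z by (intro sum_bounded_above) simp
  finally show thesis
    using that z(1) by (simp add: I_def)
qed

lemma exists_intermediate_point:
  fixes z z' :: "'a::real_normed_vector" and s :: real
  assumes "dist z z' \<le> s * Suc m"
  obtains w where "dist z w \<le> s * m" "dist w z' \<le> s"
proof
  define t where "t = real m / Suc m"
  have t: "0 \<le> t" "1 - t = 1 / Suc m"
    by (auto simp: t_def field_simps)
  show "dist z (z + t *\<^sub>R (z' - z)) \<le> s * m"
    using mult_left_mono[OF assms, of t] t by (simp add: dist_norm norm_minus_commute t_def mult.commute)
  have "z + t *\<^sub>R (z' - z) - z' = (1 - t) *\<^sub>R (z - z')"
    by (simp add: algebra_simps)
  then have "dist (z + t *\<^sub>R (z' - z)) z' = (1 - t) * dist z z'"
    using t by (simp add: dist_norm)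
  also have "\<dots> \<le> (1 - t) * (s * Suc m)"
    using assms t by (intro mult_left_mono) simp_all
  also have "\<dots> = s"
    using t(2) by simp
  finally show "dist (z + t *\<^sub>R (z' - z)) z' \<le> s" .
qed

locale probability_density =
  fixes \<kappa> :: "'a::euclidean_space \<Rightarrow> real"
  assumes nonneg: "\<And>x. 0 \<le> \<kappa> x"
    and integrable: "integrable lborel \<kappa>"
    and integral_eq_1: "(LINT x|lborel. \<kappa> x) = 1"
begin

lemma borel_measurable_density [measurable]: "\<kappa> \<in> borel_measurable borel"
  using borel_measurable_integrable[OF integrable] by simp

lemma integrable_conv_integrand:
  assumes "Linf_nonneg v"
  shows "integrable lborel (\<lambda>y. \<kappa> (y - x) * v y)"
proof -
  obtain B where B: "AE y in lborel. \<bar>v y\<bar> \<le> B" and [measurable]: "v \<in> borel_measurable borel"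
    using assms by (auto simp: Linf_nonneg_def)
  show ?thesis
  proof (rule Bochner_Integration.integrable_bound)
    show "integrable lborel (\<lambda>y. B * \<kappa> (y - x))"
      using integrable_translate_lborel[OF integrable] by simp
    show "AE y in lborel. norm (\<kappa> (y - x) * v y) \<le> norm (B * \<kappa> (y - x))"
      using B nonneg
      by (auto elim!: eventually_mono intro!: mult_right_mono simp: abs_mult mult.commute)
  qed measurable
qed

lemma conv_op_le:
  assumes "Linf_nonneg v" "AE y in lborel. v y \<le> B"
  shows "conv_op \<kappa> v x \<le> B"
proof -
  have "conv_op \<kappa> v x \<le> (LINT y|lborel. B * \<kappa> (y - x))"
    unfolding conv_op_def
    using integrable_conv_integrand[OF assms(1)] integrable_translate_lborel[OF integrable] assms(2)
    by (intro integral_mono_AE) (auto elim!: eventually_mono intro!: mult_right_mono simp: nonneg mult.commute)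
  also have "\<dots> = B"
    using integral_translate_lborel[of \<kappa>] integral_eq_1 by simp
  finally show ?thesis .
qed

lemma Linf_nonneg_conv_op:
  assumes "Linf_nonneg v"
  shows "Linf_nonneg (conv_op \<kappa> v)"
proof -
  obtain B where B: "AE y in lborel. \<bar>v y\<bar> \<le> B" and [measurable]: "v \<in> borel_measurable borel"
    using assms by (auto simp: Linf_nonneg_def)
  have "conv_op \<kappa> v x \<le> B" for x
    using assms B by (intro conv_op_le) (auto elim!: eventually_mono)
  moreover have "0 \<le> conv_op \<kappa> v x" for x
    using assms nonneg unfolding conv_op_def Linf_nonneg_def by (auto intro!: integral_nonneg_AE)
  moreover have "conv_op \<kappa> v \<in> borel_measurable borel"
    unfolding conv_op_def by measurable
  ultimately show ?thesis
    unfolding Linf_nonneg_def by auto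
qed

lemma Linf_nonneg_conv_op_iter: "Linf_nonneg v \<Longrightarrow> Linf_nonneg ((conv_op \<kappa> ^^ j) v)"
  by (induction j) (simp_all add: Linf_nonneg_conv_op)

lemma conv_op_iter_nonneg:
  assumes "Linf_nonneg v"
  shows "0 \<le> (conv_op \<kappa> ^^ j) v x"
  using Linf_nonneg_conv_op_iter[OF assms] unfolding Linf_nonneg_def by blast

lemma conv_op_iter_le:
  assumes "Linf_nonneg v" "AE y in lborel. v y \<le> B"
  shows "(conv_op \<kappa> ^^ Suc j) v x \<le> B"
proof (induction j arbitrary: x)
  case 0
  show ?case
    using assms by (simp add: conv_op_le)
next
  case (Suc j)
  have "(conv_op \<kappa> ^^ Suc (Suc j)) v x = conv_op \<kappa> ((conv_op \<kappa> ^^ Suc j) v) x"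
    by simp
  also have "\<dots> \<le> B"
    using Suc.IH by (intro conv_op_le Linf_nonneg_conv_op_iter assms(1) AE_I2)
  finally show ?case .
qed

lemma summable_exp_conv_op:
  assumes "Linf_nonneg v"
  shows "summable (\<lambda>j. (conv_op \<kappa> ^^ j) v x / fact j)"
proof -
  obtain B where B: "AE y in lborel. \<bar>v y\<bar> \<le> B"
    using assms by (auto simp: Linf_nonneg_def)
  have "\<bar>(conv_op \<kappa> ^^ j) v x\<bar> \<le> max B (v x)" for j
  proof (cases j)
    case (Suc i)
    have "(conv_op \<kappa> ^^ Suc i) v x \<le> B"
      using B by (intro conv_op_iter_le[OF assms]) (auto elim!: eventually_mono)
    then show ?thesis
      using Suc Linf_nonneg_conv_op_iter[OF assms, of j] by (simp add: Linf_nonneg_def)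
  qed (use assms in \<open>simp add: Linf_nonneg_def\<close>)
  then show ?thesis
    by (intro summable_comparison_test[OF _ summable_mult[OF summable_exp[of 1], of "max B (v x)"]])
      (auto intro!: divide_right_mono simp: field_simps)
qed

lemma conv_op_iter_le_exp_partial_sum:
  assumes "Linf_nonneg v" "i \<le> n"
  shows "(conv_op \<kappa> ^^ i) v x / fact i \<le> (\<Sum>j\<le>n. (conv_op \<kappa> ^^ j) v x / fact j)"
  using assms by (intro member_le_sum) (simp_all add: conv_op_iter_nonneg)

lemma exp_partial_sum_le_exp_conv_op:
  assumes "Linf_nonneg v"
  shows "(\<Sum>j\<le>n. (conv_op \<kappa> ^^ j) v x / fact j) \<le> (\<Sum>j. (conv_op \<kappa> ^^ j) v x / fact j)"
  using assms by (intro sum_le_suminf summable_exp_conv_op) (simp_all add: conv_op_iter_nonneg)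

lemma conv_op_ge_set_integral:
  assumes v: "Linf_nonneg v" and A: "A \<in> sets lborel" "emeasure lborel A < \<infinity>"
    and c: "\<And>y. y \<in> A \<Longrightarrow> c \<le> \<kappa> (y - x)"
  shows "c * (LINT y:A|lborel. v y) \<le> conv_op \<kappa> v x"
proof -
  have "c * (LINT y:A|lborel. v y) = (LINT y|lborel. c * (indicator A y * v y))"
    by (simp add: set_lebesgue_integral_def)
  also have "\<dots> \<le> conv_op \<kappa> v x"
    unfolding conv_op_def
  proof (intro integral_mono)
    show "integrable lborel (\<lambda>y. c * (indicator A y * v y))"
      using set_integrable_Linf_nonneg[OF v A] by (simp add: set_integrable_def)
    fix y
    show "c * (indicator A y * v y) \<le> \<kappa> (y - x) * v y"
      using v c nonneg[of "y - x"] by (cases "y \<in> A") (auto simp: Linf_nonneg_def intro: mult_right_mono)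
  qed (rule integrable_conv_integrand[OF v])
  finally show ?thesis .
qed

end

locale probability_density_bounded_below_near_0 = probability_density +
  fixes c \<rho> :: real
  assumes c_pos: "0 < c" and \<rho>_pos: "0 < \<rho>" and lower_bound: "\<And>y. norm y < \<rho> \<Longrightarrow> c \<le> \<kappa> y"
begin

lemma conv_op_ge_ball_integral:
  assumes "Linf_nonneg v" "4 * \<sigma> \<le> \<rho>" "dist z x < 3 * \<sigma>"
  shows "c * (LINT y:ball z \<sigma>|lborel. v y) \<le> conv_op \<kappa> v x"
proof (rule conv_op_ge_set_integral[OF assms(1)])
  fix y
  assume "y \<in> ball z \<sigma>"
  then have "dist y x < \<rho>"
    using assms(2,3) dist_triangle[of y x z] dist_commute[of y z] unfolding mem_ball by linarith
  then have "norm (y - x) < \<rho>"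
    by (simp add: dist_norm)
  then show "c \<le> \<kappa> (y - x)"
    by (rule lower_bound)
qed (use emeasure_lborel_ball_finite in auto)

lemma conv_op_ge_on_ball:
  assumes v: "Linf_nonneg v" "\<And>y. y \<in> ball z \<sigma> \<Longrightarrow> a \<le> v y"
    and \<sigma>: "4 * \<sigma> \<le> \<rho>" and "dist z z' \<le> 2 * \<sigma>" "x \<in> ball z' \<sigma>"
  shows "a * (c * measure lborel (ball (0::'a) \<sigma>)) \<le> conv_op \<kappa> v x"
proof -
  have "0 \<le> \<sigma>"
    using assms(5) zero_le_dist[of z' x] unfolding mem_ball by linarith
  then have "a * (c * measure lborel (ball (0::'a) \<sigma>)) = c * (LINT y:ball z \<sigma>|lborel. a)"
    using content_ball_conv_unit_ball[of \<sigma> z] content_ball_conv_unit_ball[of \<sigma> "0::'a"]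
      set_integral_const[of "ball z \<sigma>" lborel a] emeasure_lborel_ball_finite[of z \<sigma>]
    by simp
  also have "\<dots> \<le> c * (LINT y:ball z \<sigma>|lborel. v y)"
    using v c_pos set_integrable_Linf_nonneg[OF v(1)] emeasure_lborel_ball_finite[of z \<sigma>]
    by (intro mult_left_mono set_integral_mono) (auto simp: set_integrable_def)
  also have "\<dots> \<le> conv_op \<kappa> v x"
    using assms(4,5) dist_triangle[of z x z'] by (intro conv_op_ge_ball_integral v \<sigma>) auto
  finally show ?thesis .
qed

lemma conv_op_iter_ge:
  assumes v: "Linf_nonneg v" "\<And>y. y \<in> ball z \<sigma> \<Longrightarrow> a \<le> v y" and \<sigma>: "4 * \<sigma> \<le> \<rho>"
  shows "dist z z' \<le> 2 * \<sigma> * m \<Longrightarrow> x \<in> ball z' \<sigma> \<Longrightarrow>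
    a * (c * measure lborel (ball (0::'a) \<sigma>)) ^ m \<le> (conv_op \<kappa> ^^ m) v x"
proof (induction m arbitrary: z' x)
  case 0
  then show ?case
    using v(2) by simp
next
  case (Suc m)
  obtain w where w: "dist z w \<le> 2 * \<sigma> * m" "dist w z' \<le> 2 * \<sigma>"
    using exists_intermediate_point[of z z' "2 * \<sigma>" m] Suc.prems(1) by auto
  have "a * (c * measure lborel (ball (0::'a) \<sigma>)) ^ m * (c * measure lborel (ball (0::'a) \<sigma>))
      \<le> conv_op \<kappa> ((conv_op \<kappa> ^^ m) v) x"
    using Suc.IH[OF w(1)] w(2) Suc.prems(2)
    by (intro conv_op_ge_on_ball Linf_nonneg_conv_op_iter v(1) \<sigma>) auto
  then show ?case
    by (simp add: mult_ac)
qed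

lemma conv_op_iter_uniform_lower_bound:
  assumes "0 < \<delta>" "0 < r"
  obtains \<mu> n where "0 < \<mu>"
    "\<And>u x. Linf_nonneg u \<Longrightarrow> \<delta> \<le> (LINT y:ball 0 r|lborel. u y) \<Longrightarrow> x \<in> ball 0 R \<Longrightarrow>
      \<mu> \<le> (conv_op \<kappa> ^^ Suc n) u x"
proof -
  \<comment> \<open>\<sigma> = \<rho>/4 ensures |y - x| < \<rho>, hence \<kappa>(y - x) \<ge> c, for y \<in> B(z, \<sigma>) and x \<in> B(z, 3\<sigma>)\<close>
  define \<sigma> where "\<sigma> = \<rho> / 4"
  have \<sigma>: "0 < \<sigma>" "4 * \<sigma> \<le> \<rho>"
    using \<rho>_pos by (simp_all add: \<sigma>_def)
  have "cball 0 r \<subseteq> (\<Union>z\<in>cball 0 r. ball z \<sigma>)"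
    using \<sigma>(1) by (intro subsetI UN_I) auto
  then obtain C :: "'a set" where C: "C \<subseteq> cball 0 r" "finite C" "cball 0 r \<subseteq> (\<Union>z\<in>C. ball z \<sigma>)"
    by (rule compactE_image[OF compact_cball open_ball])
  then have cover: "ball 0 r \<subseteq> (\<Union>z\<in>C. ball z \<sigma>)"
    using ball_subset_cball by blast
  have "C \<noteq> {}"
    using C(3) assms(2) by auto
  then have card_pos: "0 < real (card C)"
    using C(2) by (simp add: card_gt_0_iff)
  define b where "b = c * measure lborel (ball (0::'a) \<sigma>)"
  define n where "n = nat \<lceil>(R + r) / (2 * \<sigma>)\<rceil>"
  define \<mu> where "\<mu> = c * (\<delta> / card C) * b ^ n"
  have "0 < \<mu>"
    using c_pos assms(1) \<sigma>(1) card_pos by (simp add: \<mu>_def b_def content_ball_pos)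
  moreover have "\<mu> \<le> (conv_op \<kappa> ^^ Suc n) u x"
    if u: "Linf_nonneg u" "\<delta> \<le> (LINT y:ball 0 r|lborel. u y)" and x: "x \<in> ball 0 R" for u x
  proof -
    obtain z where z: "z \<in> C" "(LINT y:ball 0 r|lborel. u y) \<le> card C * (LINT y:ball z \<sigma>|lborel. u y)"
      using set_integral_le_cover[OF u(1) C(2) \<open>C \<noteq> {}\<close> cover] by blast
    have first: "c * (\<delta> / card C) \<le> conv_op \<kappa> u y" if "y \<in> ball z \<sigma>" for y
    proof -
      have "\<delta> / card C \<le> (LINT y:ball z \<sigma>|lborel. u y)"
        using u(2) z(2) card_pos by (simp add: pos_divide_le_eq mult.commute)
      then have "c * (\<delta> / card C) \<le> c * (LINT y:ball z \<sigma>|lborel. u y)"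
        using c_pos by (intro mult_left_mono) simp_all
      also have "\<dots> \<le> conv_op \<kappa> u y"
        using that \<sigma>(1) by (intro conv_op_ge_ball_integral u(1) \<sigma>(2)) simp
      finally show ?thesis .
    qed
    have "dist z x \<le> 2 * \<sigma> * n"
    proof -
      have "norm z \<le> r"
        using C(1) z(1) by auto
      then have "dist z x \<le> R + r"
        using norm_triangle_ineq4[of z x] x by (simp add: dist_norm)
      also have "\<dots> \<le> 2 * \<sigma> * n"
        using real_nat_ceiling_ge[of "(R + r) / (2 * \<sigma>)"] \<sigma>(1)
        by (simp add: n_def pos_divide_le_eq mult.commute)
      finally show ?thesis .
    qed
    then have "\<mu> \<le> (conv_op \<kappa> ^^ n) (conv_op \<kappa> u) x"
      unfolding \<mu>_def b_def
      using \<sigma> by (intro conv_op_iter_ge[where z = z and z' = x] Linf_nonneg_conv_op u(1) first) simp_all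
    then show ?thesis
      by (simp add: funpow_Suc_right del: funpow.simps)
  qed
  ultimately show thesis
    by (rule that)
qed

lemma exp_conv_op_uniform_lower_bound:
  assumes "0 < \<delta>" "0 < r"
  shows "\<exists>\<mu>>0. \<exists>i::nat. i > 0 \<and>
    (\<forall>u. Linf_nonneg u \<and> \<delta> \<le> (LINT y:ball 0 r|lborel. u y) \<longrightarrow>
      (\<forall>x\<in>ball 0 R. \<mu> \<le> (\<Sum>j\<le>i. (conv_op \<kappa> ^^ j) u x / fact j) \<and>
        \<mu> \<le> (\<Sum>j. (conv_op \<kappa> ^^ j) u x / fact j)))"
proof -
  obtain \<mu> n where \<mu>: "0 < \<mu>" and bound: "\<And>u x. Linf_nonneg u \<Longrightarrow>
      \<delta> \<le> (LINT y:ball 0 r|lborel. u y) \<Longrightarrow> x \<in> ball 0 R \<Longrightarrow> \<mu> \<le> (conv_op \<kappa> ^^ Suc n) u x"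
    using conv_op_iter_uniform_lower_bound[OF assms] by blast
  have partial: "\<mu> / fact (Suc n) \<le> (\<Sum>j\<le>Suc n. (conv_op \<kappa> ^^ j) u x / fact j)"
    if "Linf_nonneg u" "\<delta> \<le> (LINT y:ball 0 r|lborel. u y)" "x \<in> ball 0 R" for u x
    using bound[OF that] conv_op_iter_le_exp_partial_sum[OF that(1) order_refl]
    by (meson divide_right_mono fact_ge_zero order_trans)
  have total: "\<mu> / fact (Suc n) \<le> (\<Sum>j. (conv_op \<kappa> ^^ j) u x / fact j)"
    if "Linf_nonneg u" "\<delta> \<le> (LINT y:ball 0 r|lborel. u y)" "x \<in> ball 0 R" for u x
    using partial[OF that] exp_partial_sum_le_exp_conv_op[OF that(1)] by (rule order_trans)
  have "0 < \<mu> / fact (Suc n)"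
    using \<mu> by simp
  then show ?thesis
    using partial total zero_less_Suc by blast
qed

end

lemma kappa_assm_probability_density: "kappa_assm \<kappa> \<Longrightarrow> probability_density \<kappa>"
  unfolding kappa_assm_def by unfold_locales auto

lemma kappa_assm_bounded_below_near_0:
  assumes "kappa_assm \<kappa>"
  obtains c \<rho> where "probability_density_bounded_below_near_0 \<kappa> c \<rho>"
proof -
  have "isCont \<kappa> 0" and pos: "0 < \<kappa> 0"
    using assms unfolding kappa_assm_def by (blast dest: has_derivative_continuous)+
  then obtain \<rho> where \<rho>: "0 < \<rho>" "\<And>y. dist y 0 < \<rho> \<Longrightarrow> dist (\<kappa> y) (\<kappa> 0) < \<kappa> 0 / 2"
    unfolding continuous_at_eps_delta by (meson half_gt_zero)
  have "\<kappa> 0 / 2 \<le> \<kappa> y" if "norm y < \<rho>" for y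
  proof -
    have "dist (\<kappa> y) (\<kappa> 0) < \<kappa> 0 / 2"
      using \<rho>(2) that by simp
    then show ?thesis
      unfolding dist_real_def abs_less_iff by linarith
  qed
  then have "probability_density_bounded_below_near_0 \<kappa> (\<kappa> 0 / 2) \<rho>"
    using kappa_assm_probability_density[OF assms] pos \<rho>(1)
    by (simp add: probability_density_bounded_below_near_0_def probability_density_bounded_below_near_0_axioms_def)
  then show thesis
    by (rule that)
qed

theorem proposition2p5:
  fixes \<kappa> :: "'a::euclidean_space \<Rightarrow> real" and \<delta>0 r0 :: real
  assumes "kappa_assm \<kappa>" and "0 < \<delta>0" and "\<delta>0 < 1" and "r0 > 0"
  shows "\<forall>k::nat. k > 0 \<longrightarrow>
    (\<exists>\<mu>>0. \<exists>i::nat. i > 0 \<and>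
      (\<forall>u. Linf_nonneg u \<and> (LINT x:ball 0 r0|lborel. u x) \<ge> \<delta>0 \<longrightarrow>
         (\<forall>x\<in>ball 0 (real k * r0).
            (\<Sum>j\<le>i. ((conv_op \<kappa> ^^ j) u) x / fact j) \<ge> \<mu> \<and>
            (\<Sum>j. ((conv_op \<kappa> ^^ j) u) x / fact j) \<ge> \<mu>)))"
proof -
  obtain c \<rho> where "probability_density_bounded_below_near_0 \<kappa> c \<rho>"
    using kappa_assm_bounded_below_near_0[OF assms(1)] .
  then interpret probability_density_bounded_below_near_0 \<kappa> c \<rho> .
  show ?thesis
    using exp_conv_op_uniform_lower_bound[OF assms(2,4)] by blast
qed

end
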